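(* Let $\lambda^0$ be a constant fourth-order tensor on $\mathbb{R}^3$ with minor and major symmetries ($\lambda^0_{ijkl}=\lambda^0_{jikl}=\lambda^0_{ijlk}=\lambda^0_{klij}$) which is positive definite on symmetric matrices ($\xi:\lambda^0:\xi>0$ for every nonzero real symmetric $3\times3$ matrix $\xi$). For every $q\in\mathbb{R}^3$, the $3\times 3$ matrix $M(q)$ with entries $M_{jk}(q)=\sum_{i,l}\lambda^0_{ijkl}\big(\overline{D_i(q)}D_l(q)+D_i(q)\overline{D_l(q)}\big)$ is real, symmetric and positive semidefinite, and it is positive definite (hence invertible) if and only if $D(q)\neq 0$, i.e. if and only if $q\notin 2\pi\mathbb{Z}^3\cup\big((\pi,\pi,\pi)+2\pi\mathbb{Z}^3\big)$.
   Context: Let $T=\{\tfrac12(1,1,1),\ \tfrac12(1,-1,-1),\ \tfrac12(-1,1,-1),\ \tfrac12(-1,-1,1)\}$. For $q\in\mathbb{R}^3$, $D(q)\in\mathbb{C}^3$ is defined by $D_i(q)=\sum_{e\in T} e_i\, e^{i q\cdot e}$ ($i=1,2,3$). The overline denotes complex conjugation. (The matrix $M(q)$ is the inverse of the discrete displacement Green function $\Omega(q)$ of the tetrahedral scheme.) *)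

theory Defs
  imports "HOL-Analysis.Analysis"
begin

definition tetT :: "(real^3) set" where
  "tetT = {vector [1/2, 1/2, 1/2], vector [1/2, -1/2, -1/2],
           vector [-1/2, 1/2, -1/2], vector [-1/2, -1/2, 1/2]}"

definition Dvec :: "real^3 \<Rightarrow> complex^3" where
  "Dvec q = (\<chi> i. \<Sum>e\<in>tetT. of_real (e $ i) * exp (\<i> * of_real (q \<bullet> e)))"

definition Mmat :: "(3 \<Rightarrow> 3 \<Rightarrow> 3 \<Rightarrow> 3 \<Rightarrow> real) \<Rightarrow> real^3 \<Rightarrow> complex^3^3" where
  "Mmat lam q = (\<chi> j k. \<Sum>i\<in>UNIV. \<Sum>l\<in>UNIV. of_real (lam i j k l) *
       (cnj (Dvec q $ i) * Dvec q $ l + Dvec q $ i * cnj (Dvec q $ l)))"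

text \<open>The real part of M (M will be shown to be real).\<close>
definition MmatR :: "(3 \<Rightarrow> 3 \<Rightarrow> 3 \<Rightarrow> 3 \<Rightarrow> real) \<Rightarrow> real^3 \<Rightarrow> real^3^3" where
  "MmatR lam q = (\<chi> j k. Re (Mmat lam q $ j $ k))"

end

theory Submission
  imports Defs
begin

text \<open>
  Write \<open>D = a + \<i> b\<close> with real vectors \<open>a\<close>, \<open>b\<close>. Then \<open>M\<close> is real and equals twice the sum
  of the acoustic tensors \<open>A(v)\<^sub>j\<^sub>k = \<Sum>\<^sub>i\<^sub>,\<^sub>l \<lambda>\<^sub>i\<^sub>j\<^sub>k\<^sub>l v\<^sub>i v\<^sub>l\<close> of \<open>a\<close> and \<open>b\<close>, which are symmetric by
  the symmetries of \<open>\<lambda>\<close>. By the minor symmetries \<open>x \<bullet> A(v) x = \<xi> : \<lambda> : \<xi>\<close> for the symmetric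
  part \<open>\<xi>\<close> of \<open>v \<otimes> x\<close>, which vanishes only if \<open>v = 0\<close> or \<open>x = 0\<close>; so \<open>M\<close> is positive
  semidefinite, and definite exactly when \<open>a \<noteq> 0\<close> or \<open>b \<noteq> 0\<close>.
  Finally \<open>2D\<close> has the sign-pattern combinations of the four phases \<open>exp(\<i> q\<bullet>e)\<close> as
  components, so \<open>D = 0\<close> iff all phases agree, i.e. iff the pairwise sums \<open>q\<^sub>i + q\<^sub>j\<close> lie in
  \<open>2\<pi>\<int>\<close>; and this happens iff all \<open>q\<^sub>i\<close> lie in \<open>2\<pi>\<int>\<close> or all lie in \<open>\<pi> + 2\<pi>\<int>\<close>.
\<close>

section \<open>Elasticity tensors\<close>

definition elastic_form ::
    "('n::finite \<Rightarrow> 'n \<Rightarrow> 'n \<Rightarrow> 'n \<Rightarrow> real) \<Rightarrow> real^'n^'n \<Rightarrow> real^'n^'n \<Rightarrow> real" where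
  "elastic_form lam \<xi> \<eta> =
     (\<Sum>i\<in>UNIV. \<Sum>j\<in>UNIV. \<Sum>k\<in>UNIV. \<Sum>l\<in>UNIV. \<xi> $ i $ j * lam i j k l * \<eta> $ k $ l)"

definition sym_part :: "real^'n^'n \<Rightarrow> real^'n^'n" where
  "sym_part \<xi> = (1/2) *\<^sub>R (\<xi> + transpose \<xi>)"

definition outer_prod :: "real^'n \<Rightarrow> real^'m \<Rightarrow> real^'m^'n" where
  "outer_prod v x = (\<chi> i j. v $ i * x $ j)"

definition acoustic_tensor ::
    "('n::finite \<Rightarrow> 'n \<Rightarrow> 'n \<Rightarrow> 'n \<Rightarrow> real) \<Rightarrow> real^'n \<Rightarrow> real^'n^'n" where
  "acoustic_tensor lam v = (\<chi> j k. \<Sum>i\<in>UNIV. \<Sum>l\<in>UNIV. lam i j k l * v $ i * v $ l)"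

lemma elastic_form_add_left:
  "elastic_form lam (\<xi> + \<xi>') \<eta> = elastic_form lam \<xi> \<eta> + elastic_form lam \<xi>' \<eta>"
  by (simp add: elastic_form_def distrib_right sum.distrib)

lemma elastic_form_add_right:
  "elastic_form lam \<xi> (\<eta> + \<eta>') = elastic_form lam \<xi> \<eta> + elastic_form lam \<xi> \<eta>'"
  by (simp add: elastic_form_def distrib_left sum.distrib)

lemma elastic_form_scaleR_left:
  "elastic_form lam (c *\<^sub>R \<xi>) \<eta> = c * elastic_form lam \<xi> \<eta>"
  by (simp add: elastic_form_def sum_distrib_left mult.assoc)

lemma elastic_form_scaleR_right:
  "elastic_form lam \<xi> (c *\<^sub>R \<eta>) = c * elastic_form lam \<xi> \<eta>"
  by (simp add: elastic_form_def sum_distrib_left mult_ac)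

lemma elastic_form_transpose_left:
  assumes "\<And>i j k l. lam i j k l = lam j i k l"
  shows "elastic_form lam (transpose \<xi>) \<eta> = elastic_form lam \<xi> \<eta>"
  unfolding elastic_form_def transpose_def
  by (subst sum.swap) (simp add: assms)

lemma elastic_form_transpose_right:
  assumes "\<And>i j k l. lam i j k l = lam i j l k"
  shows "elastic_form lam \<xi> (transpose \<eta>) = elastic_form lam \<xi> \<eta>"
proof -
  have "(\<Sum>k\<in>UNIV. \<Sum>l\<in>UNIV. c * lam i j k l * \<eta> $ l $ k)
      = (\<Sum>k\<in>UNIV. \<Sum>l\<in>UNIV. c * lam i j k l * \<eta> $ k $ l)" for i j c
    by (subst sum.swap) (simp add: assms)
  then show ?thesis by (simp add: elastic_form_def transpose_def)
qed

lemma elastic_form_sym_part: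
  assumes "\<And>i j k l. lam i j k l = lam j i k l" and "\<And>i j k l. lam i j k l = lam i j l k"
  shows "elastic_form lam (sym_part \<xi>) (sym_part \<xi>) = elastic_form lam \<xi> \<xi>"
  by (simp add: sym_part_def elastic_form_add_left elastic_form_add_right elastic_form_scaleR_left
      elastic_form_scaleR_right elastic_form_transpose_left[OF assms(1)]
      elastic_form_transpose_right[OF assms(2)])

lemma transpose_sym_part: "transpose (sym_part \<xi>) = sym_part \<xi>"
  by (simp add: sym_part_def transpose_def vec_eq_iff)

lemma sym_part_outer_prod_eq_0_iff: "sym_part (outer_prod v x) = 0 \<longleftrightarrow> v = 0 \<or> x = 0"
proof
  assume "sym_part (outer_prod v x) = 0"
  then have vanish: "v $ i * x $ j + x $ i * v $ j = 0" for i j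
    by (auto simp: sym_part_def outer_prod_def transpose_def vec_eq_iff mult.commute)
  show "v = 0 \<or> x = 0"
  proof (rule ccontr)
    assume "\<not> (v = 0 \<or> x = 0)"
    then obtain i j where "v $ i \<noteq> 0" "x $ j \<noteq> 0" by (auto simp: vec_eq_iff)
    moreover from this have "x $ i = 0" using vanish[of i i] by simp
    ultimately show False using vanish[of i j] by simp
  qed
qed (auto simp: sym_part_def outer_prod_def transpose_def vec_eq_iff)

lemma inner_acoustic_tensor:
  assumes "\<And>i j k l. lam i j k l = lam i j l k"
  shows "x \<bullet> (acoustic_tensor lam v *v x) = elastic_form lam (outer_prod v x) (outer_prod v x)"
proof -
  have "x \<bullet> (acoustic_tensor lam v *v x)
      = (\<Sum>j\<in>UNIV. \<Sum>k\<in>UNIV. \<Sum>i\<in>UNIV. \<Sum>l\<in>UNIV. v $ i * x $ j * lam i j k l * (v $ l * x $ k))"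
    by (simp add: inner_vec_def matrix_vector_mult_def acoustic_tensor_def sum_distrib_left
        sum_distrib_right mult_ac)
  also have "\<dots> = (\<Sum>j\<in>UNIV. \<Sum>i\<in>UNIV. \<Sum>k\<in>UNIV. \<Sum>l\<in>UNIV. v $ i * x $ j * lam i j k l * (v $ l * x $ k))"
    by (rule sum.cong[OF refl], rule sum.swap)
  also have "\<dots> = (\<Sum>i\<in>UNIV. \<Sum>j\<in>UNIV. \<Sum>k\<in>UNIV. \<Sum>l\<in>UNIV. v $ i * x $ j * lam i j k l * (v $ l * x $ k))"
    by (rule sum.swap)
  also have "\<dots> = elastic_form lam (outer_prod v x) (transpose (outer_prod v x))"
    by (simp add: elastic_form_def outer_prod_def transpose_def)
  finally show ?thesis by (simp add: elastic_form_transpose_right assms)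
qed

lemma transpose_acoustic_tensor:
  assumes "\<And>i j k l. lam i j k l = lam j i k l" and "\<And>i j k l. lam i j k l = lam i j l k"
    and "\<And>i j k l. lam i j k l = lam k l i j"
  shows "transpose (acoustic_tensor lam v) = acoustic_tensor lam v"
proof -
  have "lam i k j l = lam l j k i" for i j k l by (metis assms)
  then show ?thesis
    unfolding acoustic_tensor_def transpose_def vec_eq_iff
    by (subst sum.swap) (simp add: mult_ac)
qed

locale elasticity_tensor =
  fixes lam :: "'n::finite \<Rightarrow> 'n \<Rightarrow> 'n \<Rightarrow> 'n \<Rightarrow> real"
  assumes minor_left: "lam i j k l = lam j i k l"
    and minor_right: "lam i j k l = lam i j l k"
    and pos_def: "transpose \<xi> = \<xi> \<Longrightarrow> \<xi> \<noteq> 0 \<Longrightarrow> 0 < elastic_form lam \<xi> \<xi>"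
begin

lemma elastic_form_pos: "sym_part \<xi> \<noteq> 0 \<Longrightarrow> 0 < elastic_form lam \<xi> \<xi>"
  using pos_def[OF transpose_sym_part] by (simp add: elastic_form_sym_part minor_left minor_right)

lemma elastic_form_nonneg: "0 \<le> elastic_form lam \<xi> \<xi>"
proof (cases "sym_part \<xi> = 0")
  case True
  then have "elastic_form lam (sym_part \<xi>) (sym_part \<xi>) = 0" by (simp add: elastic_form_def)
  then show ?thesis by (simp add: elastic_form_sym_part minor_left minor_right)
qed (simp add: elastic_form_pos less_imp_le)

lemma inner_acoustic_tensor_nonneg: "0 \<le> x \<bullet> (acoustic_tensor lam v *v x)"
  by (simp add: inner_acoustic_tensor minor_right elastic_form_nonneg)

lemma inner_acoustic_tensor_pos: "v \<noteq> 0 \<Longrightarrow> x \<noteq> 0 \<Longrightarrow> 0 < x \<bullet> (acoustic_tensor lam v *v x)"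
  by (simp add: inner_acoustic_tensor minor_right elastic_form_pos sym_part_outer_prod_eq_0_iff)

end

lemma invertible_if_pos_def:
  fixes A :: "real^'n^'n"
  assumes "\<And>x. x \<noteq> 0 \<Longrightarrow> 0 < x \<bullet> (A *v x)"
  shows "invertible A"
  unfolding invertible_left_inverse matrix_left_invertible_ker
  by (metis assms inner_zero_right less_irrefl)

section \<open>The matrix \<open>M(q)\<close>\<close>

definition Dvec_Re :: "real^3 \<Rightarrow> real^3" where
  "Dvec_Re q = (\<chi> i. Re (Dvec q $ i))"

definition Dvec_Im :: "real^3 \<Rightarrow> real^3" where
  "Dvec_Im q = (\<chi> i. Im (Dvec q $ i))"

lemma Dvec_eq_0_iff_Re_Im: "Dvec q = 0 \<longleftrightarrow> Dvec_Re q = 0 \<and> Dvec_Im q = 0"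
  by (auto simp: Dvec_Re_def Dvec_Im_def vec_eq_iff complex_eq_iff)

lemma Mmat_eq:
  "Mmat lam q $ j $ k =
     of_real (2 * (acoustic_tensor lam (Dvec_Re q) $ j $ k + acoustic_tensor lam (Dvec_Im q) $ j $ k))"
proof -
  have re_im: "cnj z * w + z * cnj w = of_real (2 * (Re z * Re w + Im z * Im w))" for z w :: complex
    by (simp add: complex_eq_iff)
  have "Mmat lam q $ j $ k = of_real (\<Sum>i\<in>UNIV. \<Sum>l\<in>UNIV.
      2 * (lam i j k l * Dvec_Re q $ i * Dvec_Re q $ l + lam i j k l * Dvec_Im q $ i * Dvec_Im q $ l))"
    unfolding Mmat_def re_im by (simp add: Dvec_Re_def Dvec_Im_def ring_distribs mult_ac)
  then show ?thesis
    by (simp add: acoustic_tensor_def sum_distrib_left sum.distrib)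
qed

lemma Im_Mmat: "Im (Mmat lam q $ j $ k) = 0"
  by (simp add: Mmat_eq)

lemma Mmat_commute:
  assumes "\<And>i j k l. lam i j k l = lam j i k l" and "\<And>i j k l. lam i j k l = lam i j l k"
    and "\<And>i j k l. lam i j k l = lam k l i j"
  shows "Mmat lam q $ j $ k = Mmat lam q $ k $ j"
proof -
  have "transpose (acoustic_tensor lam v) $ j $ k = acoustic_tensor lam v $ j $ k" for v
    by (simp add: transpose_acoustic_tensor assms)
  then show ?thesis by (simp add: Mmat_eq transpose_def)
qed

lemma MmatR_eq: "MmatR lam q = 2 *\<^sub>R (acoustic_tensor lam (Dvec_Re q) + acoustic_tensor lam (Dvec_Im q))"
  by (simp add: MmatR_def Mmat_eq vec_eq_iff)

lemma inner_MmatR: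
  "x \<bullet> (MmatR lam q *v x) =
     2 * (x \<bullet> (acoustic_tensor lam (Dvec_Re q) *v x) + x \<bullet> (acoustic_tensor lam (Dvec_Im q) *v x))"
  by (simp add: MmatR_eq scaleR_matrix_vector_assoc[symmetric] matrix_vector_mult_add_rdistrib
      inner_add_right)

lemma MmatR_nonneg:
  assumes "elasticity_tensor lam"
  shows "0 \<le> x \<bullet> (MmatR lam q *v x)"
proof -
  interpret elasticity_tensor lam by fact
  show ?thesis by (simp add: inner_MmatR inner_acoustic_tensor_nonneg)
qed

lemma MmatR_pos_def_iff:
  assumes "elasticity_tensor lam"
  shows "(\<forall>x. x \<noteq> 0 \<longrightarrow> 0 < x \<bullet> (MmatR lam q *v x)) \<longleftrightarrow> Dvec q \<noteq> 0"
proof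
  assume "\<forall>x. x \<noteq> 0 \<longrightarrow> 0 < x \<bullet> (MmatR lam q *v x)"
  moreover have "(1::real^3) \<noteq> 0" by (simp add: vec_eq_iff)
  ultimately have "0 < 1 \<bullet> (MmatR lam q *v 1)" by blast
  moreover have "acoustic_tensor lam 0 = 0" by (simp add: acoustic_tensor_def vec_eq_iff)
  ultimately show "Dvec q \<noteq> 0" by (auto simp: Dvec_eq_0_iff_Re_Im inner_MmatR)
next
  interpret elasticity_tensor lam by fact
  assume "Dvec q \<noteq> 0"
  then have "Dvec_Re q \<noteq> 0 \<or> Dvec_Im q \<noteq> 0" by (simp add: Dvec_eq_0_iff_Re_Im)
  then show "\<forall>x. x \<noteq> 0 \<longrightarrow> 0 < x \<bullet> (MmatR lam q *v x)"
    using inner_acoustic_tensor_pos inner_acoustic_tensor_nonneg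
    by (auto simp: inner_MmatR add_pos_nonneg add_nonneg_pos)
qed

section \<open>Zeros of \<open>D\<close>\<close>

lemma sum_tetT:
  "(\<Sum>e\<in>tetT. f e) = f (vector [1/2, 1/2, 1/2]) + f (vector [1/2, -1/2, -1/2])
                    + f (vector [-1/2, 1/2, -1/2]) + f (vector [-1/2, -1/2, 1/2])"
  by (simp add: tetT_def vec_eq_iff forall_3 add.assoc)

lemma Dvec_nth: "Dvec q $ i = (\<Sum>e\<in>tetT. of_real (e $ i) * cis (q \<bullet> e))"
  by (simp add: Dvec_def cis_conv_exp)

lemma cis_eq_1_iff: "cis x = 1 \<longleftrightarrow> (\<exists>n::int. x = 2 * pi * n)"
  by (simp add: cis_conv_exp exp_eq_1 mult_ac)

lemma sign_pattern_sums_eq_0_iff: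
  fixes z1 z2 z3 z4 :: "'a::field_char_0"
  shows "z1 + z2 - z3 - z4 = 0 \<and> z1 - z2 + z3 - z4 = 0 \<and> z1 - z2 - z3 + z4 = 0
     \<longleftrightarrow> z2 = z1 \<and> z3 = z1 \<and> z4 = z1"
proof
  assume "z1 + z2 - z3 - z4 = 0 \<and> z1 - z2 + z3 - z4 = 0 \<and> z1 - z2 - z3 + z4 = 0"
  then have s1: "z1 + z2 - z3 - z4 = 0" and s2: "z1 - z2 + z3 - z4 = 0" and s3: "z1 - z2 - z3 + z4 = 0"
    by blast+
  have "2 * (z1 - z2) = (z1 - z2 + z3 - z4) + (z1 - z2 - z3 + z4)"
    and "2 * (z1 - z3) = (z1 + z2 - z3 - z4) + (z1 - z2 - z3 + z4)"
    and "2 * (z1 - z4) = (z1 + z2 - z3 - z4) + (z1 - z2 + z3 - z4)"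
    by (simp_all add: algebra_simps)
  then show "z2 = z1 \<and> z3 = z1 \<and> z4 = z1"
    unfolding s1 s2 s3 by simp
qed simp

lemma Dvec_eq_0_iff:
  "Dvec q = 0 \<longleftrightarrow> cis (q$2 + q$3) = 1 \<and> cis (q$1 + q$3) = 1 \<and> cis (q$1 + q$2) = 1"
proof -
  define e1 e2 e3 e4 :: "real^3"
    where "e1 = vector [1/2, 1/2, 1/2]" and "e2 = vector [1/2, -1/2, -1/2]"
      and "e3 = vector [-1/2, 1/2, -1/2]" and "e4 = vector [-1/2, -1/2, 1/2]"
  define c where "c e = cis (q \<bullet> e)" for e
  have D: "Dvec q $ 1 = (c e1 + c e2 - c e3 - c e4) / 2"
    "Dvec q $ 2 = (c e1 - c e2 + c e3 - c e4) / 2"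
    "Dvec q $ 3 = (c e1 - c e2 - c e3 + c e4) / 2"
    unfolding Dvec_nth sum_tetT c_def e1_def e2_def e3_def e4_def
    by (simp_all add: diff_divide_distrib add_divide_distrib)
  have "Dvec q = 0 \<longleftrightarrow> Dvec q $ 1 = 0 \<and> Dvec q $ 2 = 0 \<and> Dvec q $ 3 = 0"
    by (simp add: vec_eq_iff forall_3)
  also have "\<dots> \<longleftrightarrow> c e2 = c e1 \<and> c e3 = c e1 \<and> c e4 = c e1"
    using sign_pattern_sums_eq_0_iff[of "c e1" "c e2" "c e3" "c e4"] unfolding D by simp
  finally have "Dvec q = 0 \<longleftrightarrow> c e2 = c e1 \<and> c e3 = c e1 \<and> c e4 = c e1" .
  moreover have "c e = c e1 \<longleftrightarrow> cis (q \<bullet> e1 - q \<bullet> e) = 1" for e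
    by (auto simp: c_def cis_divide[symmetric])
  moreover have "q \<bullet> e1 - q \<bullet> e2 = q$2 + q$3" "q \<bullet> e1 - q \<bullet> e3 = q$1 + q$3"
    "q \<bullet> e1 - q \<bullet> e4 = q$1 + q$2"
    by (simp_all add: inner_vec_def sum_3 e1_def e2_def e3_def e4_def field_simps)
  ultimately show ?thesis by simp
qed

lemma pairwise_sums_multiple_2pi_iff:
  fixes x y z :: real
  shows "(\<exists>n::int. y + z = 2 * pi * n) \<and> (\<exists>n::int. x + z = 2 * pi * n) \<and> (\<exists>n::int. x + y = 2 * pi * n)
     \<longleftrightarrow> (\<forall>u\<in>{x, y, z}. \<exists>n::int. u = 2 * pi * n) \<or> (\<forall>u\<in>{x, y, z}. \<exists>n::int. u = pi + 2 * pi * n)"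
proof
  assume "(\<exists>n::int. y + z = 2 * pi * n) \<and> (\<exists>n::int. x + z = 2 * pi * n) \<and> (\<exists>n::int. x + y = 2 * pi * n)"
  then obtain n1 n2 n3 :: int
    where sums: "y + z = 2 * pi * n2" "x + z = 2 * pi * n3" "x + y = 2 * pi * n1" by blast
  define m where "m = n1 + n3 - n2"
  have x: "x = pi * m" and y: "y = 2 * pi * n1 - pi * m" and z: "z = 2 * pi * n3 - pi * m"
    using sums by (simp_all add: m_def algebra_simps)
  show "(\<forall>u\<in>{x, y, z}. \<exists>n::int. u = 2 * pi * n) \<or> (\<forall>u\<in>{x, y, z}. \<exists>n::int. u = pi + 2 * pi * n)"
  proof (cases "even m")
    case True
    then obtain a where "m = 2 * a" by blast
    then have "x = 2 * pi * a" "y = 2 * pi * (n1 - a)" "z = 2 * pi * (n3 - a)"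
      using x y z by (simp_all add: algebra_simps)
    then show ?thesis by blast
  next
    case False
    then obtain a where "m = 2 * a + 1" using oddE by blast
    then have "x = pi + 2 * pi * a" "y = pi + 2 * pi * (n1 - a - 1)" "z = pi + 2 * pi * (n3 - a - 1)"
      using x y z by (simp_all add: algebra_simps)
    then show ?thesis by blast
  qed
next
  assume "(\<forall>u\<in>{x, y, z}. \<exists>n::int. u = 2 * pi * n) \<or> (\<forall>u\<in>{x, y, z}. \<exists>n::int. u = pi + 2 * pi * n)"
  then show "(\<exists>n::int. y + z = 2 * pi * n) \<and> (\<exists>n::int. x + z = 2 * pi * n) \<and> (\<exists>n::int. x + y = 2 * pi * n)"
  proof
    assume "\<forall>u\<in>{x, y, z}. \<exists>n::int. u = 2 * pi * n"
    then obtain a b d :: int where "x = 2 * pi * a" "y = 2 * pi * b" "z = 2 * pi * d" by auto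
    then have "x + y = 2 * pi * (a + b)" "y + z = 2 * pi * (b + d)" "x + z = 2 * pi * (a + d)"
      by (simp_all add: algebra_simps)
    then show ?thesis by blast
  next
    assume "\<forall>u\<in>{x, y, z}. \<exists>n::int. u = pi + 2 * pi * n"
    then obtain a b d :: int where "x = pi + 2 * pi * a" "y = pi + 2 * pi * b" "z = pi + 2 * pi * d"
      by auto
    then have "x + y = 2 * pi * (a + b + 1)" "y + z = 2 * pi * (b + d + 1)" "x + z = 2 * pi * (a + d + 1)"
      by (simp_all add: algebra_simps)
    then show ?thesis by blast
  qed
qed

lemma Dvec_eq_0_iff_lattice:
  "Dvec q = 0 \<longleftrightarrow> q \<in> {p. \<forall>i. \<exists>n::int. p $ i = 2 * pi * of_int n}
                     \<union> {p. \<forall>i. \<exists>n::int. p $ i = pi + 2 * pi * of_int n}"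
  unfolding Dvec_eq_0_iff cis_eq_1_iff pairwise_sums_multiple_2pi_iff by (simp add: forall_3)

theorem mainTheorem2:
  fixes lam :: "3 \<Rightarrow> 3 \<Rightarrow> 3 \<Rightarrow> 3 \<Rightarrow> real" and q :: "real^3"
  assumes minor1: "\<And>i j k l. lam i j k l = lam j i k l"
    and minor2: "\<And>i j k l. lam i j k l = lam i j l k"
    and major: "\<And>i j k l. lam i j k l = lam k l i j"
    and posdef: "\<And>\<xi> :: real^3^3. transpose \<xi> = \<xi> \<Longrightarrow> \<xi> \<noteq> 0 \<Longrightarrow>
        (\<Sum>i\<in>UNIV. \<Sum>j\<in>UNIV. \<Sum>k\<in>UNIV. \<Sum>l\<in>UNIV. \<xi> $ i $ j * lam i j k l * \<xi> $ k $ l) > 0"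
  shows "(\<forall>j k. Im (Mmat lam q $ j $ k) = 0)
    \<and> (\<forall>j k. Mmat lam q $ j $ k = Mmat lam q $ k $ j)
    \<and> (\<forall>x :: real^3. 0 \<le> x \<bullet> (MmatR lam q *v x))
    \<and> ((\<forall>x :: real^3. x \<noteq> 0 \<longrightarrow> 0 < x \<bullet> (MmatR lam q *v x)) \<longleftrightarrow> Dvec q \<noteq> 0)
    \<and> (Dvec q \<noteq> 0 \<longrightarrow> invertible (MmatR lam q))
    \<and> (Dvec q \<noteq> 0 \<longleftrightarrow>
         q \<notin> ({p. \<forall>i. \<exists>n::int. p $ i = 2 * pi * of_int n}
              \<union> {p. \<forall>i. \<exists>n::int. p $ i = pi + 2 * pi * of_int n}))"
proof -
  have elasticity: "elasticity_tensor lam"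
  proof
    show "lam i j k l = lam j i k l" for i j k l by (fact minor1)
    show "lam i j k l = lam i j l k" for i j k l by (fact minor2)
    show "0 < elastic_form lam \<xi> \<xi>" if "transpose \<xi> = \<xi>" "\<xi> \<noteq> 0" for \<xi>
      using posdef[OF that] by (simp only: elastic_form_def)
  qed
  have invertible: "invertible (MmatR lam q)" if "Dvec q \<noteq> 0"
    using that MmatR_pos_def_iff[OF elasticity] invertible_if_pos_def by blast
  show ?thesis
    using Im_Mmat Mmat_commute[OF minor1 minor2 major] MmatR_nonneg[OF elasticity]
      MmatR_pos_def_iff[OF elasticity] invertible
    unfolding Dvec_eq_0_iff_lattice[symmetric] by simp
qed

end
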